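(* Let $a<b$ and let $f:[a,b]\rightarrow\mathbb{R}$ be a twice continuously differentiable mapping in $(a,b)$ with $f''\in L^2[a,b]$. Then for all $x\in[a,\frac{a+b}{2}]$, \[ \left|\frac{f(x)+f(a+b-x)}{2}-\frac{1}{b-a}\int_{a}^{b}f(t)\,dt\right| \leq \frac{(b-a)^{1/2}}{\pi}\left[\frac{(b-a)^2}{48}+\left(x-\frac{3a+b}{4}\right)^2\right]^{1/2}\|f''\|_2. \]
   Context: $\|g\|_2=\left(\int_a^b g(t)^2\,dt\right)^{1/2}$. *)

theory Defs
  imports "HOL-Analysis.Analysis"
begin

definition L2norm :: "(real \<Rightarrow> real) \<Rightarrow> real \<Rightarrow> real \<Rightarrow> real" where
  "L2norm g a b = sqrt (integral {a..b} (\<lambda>t. (g t)\<^sup>2))"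

end

theory Submission
  imports Defs
begin

text \<open>
  With m = (a+b)/2 and x' = a+b-x, the Peano kernel K, equal to (t-a)^2/2 on [a,x],
  ((t-m)^2 + (x-a)^2 - (m-x)^2)/2 on [x,x'] and (t-b)^2/2 on [x',b], is continuous, vanishes
  at a and b, satisfies K'' = 1 on each piece, and K' jumps by -(b-a)/2 at x and at x'.
  Integrating by parts twice on each piece therefore gives
  int_a^b K f'' = int_a^b f - (b-a) (f x + f x') / 2.
  By Cauchy-Schwarz this is at most (int K^2)^(1/2) ||f''||_2, and an explicit computation
  of the polynomial int K^2 shows 10 int K^2 <= (b-a)^3 ((b-a)^2/48 + (x-(3a+b)/4)^2),
  which suffices because pi^2 <= 10.
\<close>

lemma derivative_bounded_if_square_integrable:
  fixes f' f'' :: "real \<Rightarrow> real"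
  assumes "a < b"
    and f'': "\<And>t. t \<in> {a<..<b} \<Longrightarrow> (f' has_real_derivative f'' t) (at t)"
    and square: "(\<lambda>t. (f'' t)\<^sup>2) integrable_on {a..b}"
  obtains M where "\<And>t. t \<in> {a<..<b} \<Longrightarrow> \<bar>f' t\<bar> \<le> M"
proof -
  define h where "h t = (1 + (f'' t)\<^sup>2) / 2" for t
  have h_int: "h integrable_on {a..b}"
    unfolding h_def by (intro integrable_on_divide integrable_add square) auto
  have oscillation: "\<bar>f' s - f' r\<bar> \<le> integral {a..b} h" if "a < r" "r \<le> s" "s < b" for r s
  proof -
    have sub: "{r..s} \<subseteq> {a..b}" using that by auto
    have ftc: "(f'' has_integral (f' s - f' r)) {r..s}"
      using that f'' by (intro fundamental_theorem_of_calculus)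
        (auto simp: has_real_derivative_iff_has_vector_derivative[symmetric]
          intro: has_field_derivative_at_within)
    have "\<bar>f'' t\<bar> \<le> h t" for t
      using sum_squares_ge_zero[of "\<bar>f'' t\<bar> - 1" 0]
      by (simp add: h_def power2_eq_square algebra_simps)
    then have "\<bar>integral {r..s} f''\<bar> \<le> integral {r..s} h"
      using Henstock_Kurzweil_Integration.integral_norm_bound_integral
        [OF has_integral_integrable[OF ftc] integrable_on_subinterval[OF h_int sub]]
      by simp
    also have "\<dots> \<le> integral {a..b} h"
      by (rule integral_subset_le[OF sub integrable_on_subinterval[OF h_int sub] h_int])
        (simp add: h_def)
    finally show ?thesis using integral_unique[OF ftc] by simp
  qed
  define m where "m = (a + b) / 2"
  have "\<bar>f' t\<bar> \<le> \<bar>f' m\<bar> + integral {a..b} h" if "t \<in> {a<..<b}" for t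
    using oscillation[of t m] oscillation[of m t] that \<open>a < b\<close>
    by (cases "t \<le> m") (auto simp: m_def)
  then show ?thesis using that by blast
qed

lemma continuous_on_mult_bounded_vanishing:
  fixes q g :: "'a::t2_space \<Rightarrow> real"
  assumes q: "continuous_on S q"
    and bound: "\<And>t. \<bar>g t\<bar> \<le> M"
    and vanish_or_cont: "\<And>t. t \<in> S \<Longrightarrow> q t = 0 \<or> isCont g t"
  shows "continuous_on S (\<lambda>t. q t * g t)"
  unfolding continuous_on_eq_continuous_within
proof
  fix t assume t: "t \<in> S"
  have qt: "continuous (at t within S) q"
    using q t by (simp add: continuous_on_eq_continuous_within)
  show "continuous (at t within S) (\<lambda>t. q t * g t)"
  proof (cases "q t = 0")
    case True
    then have "(q \<longlongrightarrow> 0) (at t within S)"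
      using qt by (simp add: continuous_within)
    then have lim: "((\<lambda>s. M * \<bar>q s\<bar>) \<longlongrightarrow> 0) (at t within S)"
      using tendsto_mult_left[OF tendsto_rabs_zero, of q _ M] by simp
    have "\<forall>s. norm (q s * g s) \<le> M * \<bar>q s\<bar>"
      using mult_left_mono[OF bound, of "\<bar>q _\<bar>"] by (simp add: abs_mult mult.commute)
    then have "((\<lambda>s. q s * g s) \<longlongrightarrow> 0) (at t within S)"
      by (rule Lim_null_comparison[OF always_eventually lim])
    with True show ?thesis by (simp add: continuous_within)
  next
    case False
    then show ?thesis
      using qt vanish_or_cont[OF t] by (auto intro: continuous_intros continuous_at_imp_continuous_within)
  qed
qed

text \<open>
  f' need not extend continuously to a or b: where q vanishes there, boundedness of f'
  makes q f' continuous on [c,d].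
\<close>
lemma has_integral_quadratic_mult_second_derivative:
  fixes f f' f'' q :: "real \<Rightarrow> real"
  assumes "c \<le> d" and sub: "{c..d} \<subseteq> {a..b}"
    and f: "continuous_on {a..b} f"
    and f': "\<And>t. t \<in> {a<..<b} \<Longrightarrow> (f has_real_derivative f' t) (at t)"
    and f'': "\<And>t. t \<in> {a<..<b} \<Longrightarrow> (f' has_real_derivative f'' t) (at t)"
    and bound: "\<And>t. t \<in> {a<..<b} \<Longrightarrow> \<bar>f' t\<bar> \<le> M"
    and q': "\<And>t. (q has_real_derivative t - k) (at t)"
    and vanish: "\<And>t. t \<in> {c..d} \<Longrightarrow> t \<notin> {a<..<b} \<Longrightarrow> q t = 0"
  shows "((\<lambda>t. q t * f'' t) has_integral
      (q d * f' d - (d - k) * f d + integral {a..d} f)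
      - (q c * f' c - (c - k) * f c + integral {a..c} f)) {c..d}"
proof -
  define g where "g t = (if t \<in> {a<..<b} then f' t else 0)" for t
  define \<Phi> where "\<Phi> t = q t * g t - (t - k) * f t + integral {a..t} f" for t
  have g': "(g has_real_derivative f'' t) (at t)" if "t \<in> {a<..<b}" for t
    using has_field_derivative_transform_within_open[OF f''[OF that] open_greaterThanLessThan that]
    by (simp add: g_def)
  have qg: "continuous_on {c..d} (\<lambda>t. q t * g t)"
  proof (rule continuous_on_mult_bounded_vanishing)
    show "continuous_on {c..d} q"
      using q' by (meson DERIV_isCont continuous_at_imp_continuous_on)
    show "\<bar>g t\<bar> \<le> max M 0" for t
      using bound by (auto simp: g_def le_max_iff_disj)
    show "q t = 0 \<or> isCont g t" if "t \<in> {c..d}" for t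
      using vanish[OF that] DERIV_isCont[OF g'] by blast
  qed
  have F: "continuous_on {a..b} (\<lambda>t. integral {a..t} f)"
    by (rule indefinite_integral_continuous_1[OF integrable_continuous_interval[OF f]])
  have "continuous_on {c..d} \<Phi>"
    unfolding \<Phi>_def
    by (rule continuous_on_add[OF continuous_on_diff[OF qg]])
      (auto intro!: continuous_intros continuous_on_subset[OF f sub] continuous_on_subset[OF F sub])
  moreover have "(\<Phi> has_vector_derivative q t * f'' t) (at t)" if "t \<in> {c<..<d}" for t
  proof -
    have t: "t \<in> {a<..<b}" using that sub \<open>c \<le> d\<close> by auto
    have "((\<lambda>t. integral {a..t} f) has_real_derivative f t) (at t)"
      using integral_has_real_derivative[OF f, of t] t by (simp add: at_within_Icc_at)
    then have "(\<Phi> has_real_derivative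
        (t - k) * g t + f'' t * q t - (1 * f t + f' t * (t - k)) + f t) (at t)"
      unfolding \<Phi>_def
      by (intro DERIV_add DERIV_diff DERIV_mult q' g'[OF t] f'[OF t])
        (auto intro!: derivative_eq_intros)
    also have "(t - k) * g t + f'' t * q t - (1 * f t + f' t * (t - k)) + f t = q t * f'' t"
      using t by (simp add: g_def algebra_simps)
    finally show ?thesis by (simp add: has_real_derivative_iff_has_vector_derivative)
  qed
  ultimately have "((\<lambda>t. q t * f'' t) has_integral (\<Phi> d - \<Phi> c)) {c..d}"
    by (intro fundamental_theorem_of_calculus_interior[OF \<open>c \<le> d\<close>]) auto
  moreover have "q t * g t = q t * f' t" if "t \<in> {c..d}" for t
    using vanish[OF that] by (auto simp: g_def)
  ultimately show ?thesis using \<open>c \<le> d\<close> by (simp add: \<Phi>_def)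
qed

lemma has_integral_square_shifted_quadratic:
  fixes c d k C :: real
  assumes "c \<le> d"
  defines "G \<equiv> \<lambda>t. ((t - k)^5 / 5 + 2 * C * (t - k)^3 / 3 + C\<^sup>2 * (t - k)) / 4"
  shows "((\<lambda>t. (((t - k)\<^sup>2 + C) / 2)\<^sup>2) has_integral (G d - G c)) {c..d}"
proof (rule fundamental_theorem_of_calculus[OF assms(1)])
  fix t
  have "(G has_real_derivative (((t - k)\<^sup>2 + C) / 2)\<^sup>2) (at t within {c..d})"
    unfolding G_def
    by (auto intro!: derivative_eq_intros simp: field_simps power2_eq_square eval_nat_numeral)
  then show "(G has_vector_derivative (((t - k)\<^sup>2 + C) / 2)\<^sup>2) (at t within {c..d})"
    by (simp add: has_real_derivative_iff_has_vector_derivative)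
qed

lemma le_sqrt_mult_if_weighted_bounds:
  fixes A B I :: real
  assumes "A \<ge> 0" "B \<ge> 0" and weighted: "\<And>\<alpha>. \<alpha> > 0 \<Longrightarrow> 2 * I \<le> \<alpha> * A + B / \<alpha>"
  shows "I \<le> sqrt A * sqrt B"
proof (cases "A > 0 \<and> B > 0")
  case True
  then have "sqrt A > 0" "sqrt B > 0" "sqrt A * sqrt A = A" "sqrt B * sqrt B = B" by auto
  then have "sqrt B / sqrt A * A = sqrt A * sqrt B" "B / (sqrt B / sqrt A) = sqrt A * sqrt B"
    by (simp_all add: field_simps)
  then show ?thesis
    using weighted[of "sqrt B / sqrt A"] True by simp
next
  case False
  have "2 * I \<le> \<epsilon>" if "\<epsilon> > 0" for \<epsilon>
  proof (cases "A = 0")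
    case True
    have "2 * I \<le> B / ((B + 1) / \<epsilon>)"
      using weighted[of "(B + 1) / \<epsilon>"] True \<open>B \<ge> 0\<close> \<open>\<epsilon> > 0\<close> by simp
    also have "\<dots> \<le> \<epsilon>" using \<open>B \<ge> 0\<close> \<open>\<epsilon> > 0\<close> by (simp add: field_simps)
    finally show ?thesis .
  next
    case False
    then have "B = 0" using \<open>\<not> (A > 0 \<and> B > 0)\<close> assms(1,2) by auto
    have "2 * I \<le> \<epsilon> / (A + 1) * A"
      using weighted[of "\<epsilon> / (A + 1)"] \<open>B = 0\<close> \<open>A \<ge> 0\<close> \<open>\<epsilon> > 0\<close> by simp
    also have "\<dots> \<le> \<epsilon>" using \<open>A \<ge> 0\<close> \<open>\<epsilon> > 0\<close> by (simp add: field_simps)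
    finally show ?thesis .
  qed
  then have "2 * I \<le> 0" by (rule field_le_epsilon) simp
  moreover have "0 \<le> sqrt A * sqrt B" using assms(1,2) by simp
  ultimately show ?thesis by linarith
qed

lemma abs_integral_mult_le_sqrt:
  fixes p q :: "real \<Rightarrow> real"
  assumes pq: "(\<lambda>t. p t * q t) integrable_on S"
    and p: "((\<lambda>t. (p t)\<^sup>2) has_integral A) S" and q: "((\<lambda>t. (q t)\<^sup>2) has_integral B) S"
  shows "\<bar>integral S (\<lambda>t. p t * q t)\<bar> \<le> sqrt A * sqrt B"
proof -
  have "A \<ge> 0" "B \<ge> 0"
    using has_integral_nonneg[OF p] has_integral_nonneg[OF q] by auto
  have weighted: "2 * (s * integral S (\<lambda>t. p t * q t)) \<le> \<alpha> * A + B / \<alpha>"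
    if "\<alpha> > 0" "\<bar>s\<bar> = 1" for \<alpha> s
  proof -
    have sum: "((\<lambda>t. \<alpha> * (p t)\<^sup>2 + (q t)\<^sup>2 / \<alpha>) has_integral (\<alpha> * A + B / \<alpha>)) S"
      by (intro has_integral_add has_integral_mult_right has_integral_divide p q)
    have "2 * (s * p t * q t) \<le> \<alpha> * (p t)\<^sup>2 + (q t)\<^sup>2 / \<alpha>" for t
    proof -
      have "0 \<le> (\<alpha> * (s * p t) - q t)\<^sup>2 / \<alpha>" using \<open>\<alpha> > 0\<close> by simp
      also have "\<dots> = \<alpha> * (s * p t)\<^sup>2 + (q t)\<^sup>2 / \<alpha> - 2 * (s * p t * q t)"
        using \<open>\<alpha> > 0\<close> by (simp add: field_simps power2_eq_square)
      finally show ?thesis using \<open>\<bar>s\<bar> = 1\<close> by (simp add: power_mult_distrib abs_if split: if_splits)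
    qed
    then have "integral S (\<lambda>t. 2 * s * (p t * q t)) \<le> \<alpha> * A + B / \<alpha>"
      using integral_le[OF integrable_cmul[OF pq, of "2 * s"] has_integral_integrable[OF sum]]
        integral_unique[OF sum]
      by (simp add: mult.assoc)
    then show ?thesis by simp
  qed
  have "s * integral S (\<lambda>t. p t * q t) \<le> sqrt A * sqrt B" if "\<bar>s\<bar> = 1" for s
    using \<open>A \<ge> 0\<close> \<open>B \<ge> 0\<close> weighted[OF _ that] by (rule le_sqrt_mult_if_weighted_bounds)
  from this[of 1] this[of "-1"] show ?thesis by simp
qed

definition peano_kernel :: "real \<Rightarrow> real \<Rightarrow> real \<Rightarrow> real \<Rightarrow> real" where
  "peano_kernel a b x t =
    (if t \<le> x then (t - a)\<^sup>2 / 2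
     else if t \<le> a + b - x then ((t - (a + b) / 2)\<^sup>2 + (x - a)\<^sup>2 - ((a + b) / 2 - x)\<^sup>2) / 2
     else (t - b)\<^sup>2 / 2)"

lemma peano_kernel_pieces:
  assumes "x \<in> {a..(a + b) / 2}"
  shows "t \<in> {a..x} \<Longrightarrow> peano_kernel a b x t = (t - a)\<^sup>2 / 2"
    and "t \<in> {x..a + b - x} \<Longrightarrow>
      peano_kernel a b x t = ((t - (a + b) / 2)\<^sup>2 + (x - a)\<^sup>2 - ((a + b) / 2 - x)\<^sup>2) / 2"
    and "t \<in> {a + b - x..b} \<Longrightarrow> peano_kernel a b x t = (t - b)\<^sup>2 / 2"
proof -
  have "(x - (a + b) / 2)\<^sup>2 = ((a + b) / 2 - x)\<^sup>2" "(a + b - x - (a + b) / 2)\<^sup>2 = ((a + b) / 2 - x)\<^sup>2"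
    "(a + b - x - b)\<^sup>2 = (x - a)\<^sup>2" "x = a + b - x \<Longrightarrow> (x - a)\<^sup>2 = (b - x)\<^sup>2"
    by (simp_all add: power2_eq_square algebra_simps)
  with assms show "t \<in> {a..x} \<Longrightarrow> peano_kernel a b x t = (t - a)\<^sup>2 / 2"
    and "t \<in> {x..a + b - x} \<Longrightarrow>
      peano_kernel a b x t = ((t - (a + b) / 2)\<^sup>2 + (x - a)\<^sup>2 - ((a + b) / 2 - x)\<^sup>2) / 2"
    and "t \<in> {a + b - x..b} \<Longrightarrow> peano_kernel a b x t = (t - b)\<^sup>2 / 2"
    by (auto simp: peano_kernel_def)
qed

lemma peano_kernel_has_integral:
  fixes f f' f'' :: "real \<Rightarrow> real"
  assumes "a < b" and x: "x \<in> {a..(a + b) / 2}"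
    and f: "continuous_on {a..b} f"
    and f': "\<And>t. t \<in> {a<..<b} \<Longrightarrow> (f has_real_derivative f' t) (at t)"
    and f'': "\<And>t. t \<in> {a<..<b} \<Longrightarrow> (f' has_real_derivative f'' t) (at t)"
    and square: "(\<lambda>t. (f'' t)\<^sup>2) integrable_on {a..b}"
  shows "((\<lambda>t. peano_kernel a b x t * f'' t) has_integral
      integral {a..b} f - (b - a) / 2 * (f x + f (a + b - x))) {a..b}"
proof -
  obtain M where bound: "\<And>t. t \<in> {a<..<b} \<Longrightarrow> \<bar>f' t\<bar> \<le> M"
    using derivative_bounded_if_square_integrable[OF \<open>a < b\<close> f'' square] by blast
  note by_parts = has_integral_quadratic_mult_second_derivative[OF _ _ f f' f'' bound]
  define m where "m = (a + b) / 2"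
  define x' where "x' = a + b - x"
  define q1 where "q1 t = (t - a)\<^sup>2 / 2" for t
  define q2 where "q2 t = ((t - m)\<^sup>2 + (x - a)\<^sup>2 - (m - x)\<^sup>2) / 2" for t
  define q3 where "q3 t = (t - b)\<^sup>2 / 2" for t
  define F where "F t = integral {a..t} f" for t
  have "a \<le> x" "x \<le> x'" "x' \<le> b" "x < b" "a < x'"
    using x \<open>a < b\<close> by (auto simp: x'_def)
  have q': "(q1 has_real_derivative t - a) (at t)" "(q2 has_real_derivative t - m) (at t)"
    "(q3 has_real_derivative t - b) (at t)" for t
    unfolding q1_def q2_def q3_def by (auto intro!: derivative_eq_intros)
  have ends: "q1 a = 0" "q3 b = 0"
    by (simp_all add: q1_def q3_def)
  have pieces: "t \<in> {a..x} \<Longrightarrow> peano_kernel a b x t = q1 t"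
    "t \<in> {x..x'} \<Longrightarrow> peano_kernel a b x t = q2 t"
    "t \<in> {x'..b} \<Longrightarrow> peano_kernel a b x t = q3 t" for t
    using peano_kernel_pieces[OF x, of t] by (simp_all add: q1_def q2_def q3_def m_def x'_def)
  have J1: "((\<lambda>t. peano_kernel a b x t * f'' t) has_integral
      (q1 x * f' x - (x - a) * f x + F x) - (q1 a * f' a - (a - a) * f a + F a)) {a..x}"
    unfolding F_def using \<open>a \<le> x\<close> \<open>x < b\<close>
    by (intro has_integral_eq[OF _ by_parts[where q = q1 and k = a]])
      (auto simp: pieces q' ends)
  have J2: "((\<lambda>t. peano_kernel a b x t * f'' t) has_integral
      (q2 x' * f' x' - (x' - m) * f x' + F x') - (q2 x * f' x - (x - m) * f x + F x)) {x..x'}"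
    unfolding F_def
  proof (rule has_integral_eq[OF _ by_parts[where q = q2 and k = m]])
    show "q2 t = 0" if "t \<in> {x..x'}" "t \<notin> {a<..<b}" for t
    proof -
      have "t = a \<or> t = b" "x = a" using that \<open>a \<le> x\<close> \<open>x' \<le> b\<close> by (auto simp: x'_def)
      then show ?thesis by (auto simp: q2_def m_def power2_eq_square field_simps)
    qed
  qed (use \<open>a \<le> x\<close> \<open>x \<le> x'\<close> \<open>x' \<le> b\<close> in \<open>auto simp: pieces q'\<close>)
  have J3: "((\<lambda>t. peano_kernel a b x t * f'' t) has_integral
      (q3 b * f' b - (b - b) * f b + F b) - (q3 x' * f' x' - (x' - b) * f x' + F x')) {x'..b}"
    unfolding F_def using \<open>x' \<le> b\<close> \<open>a < x'\<close>
    by (intro has_integral_eq[OF _ by_parts[where q = q3 and k = b]])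
      (auto simp: pieces q' ends)
  have "q1 x = q2 x" "q2 x' = q3 x'"
    using pieces[of x] pieces[of x'] \<open>a \<le> x\<close> \<open>x \<le> x'\<close> \<open>x' \<le> b\<close> by auto
  moreover have "F a = 0"
    by (simp add: F_def)
  ultimately show ?thesis
    by (intro has_integral_eq_rhs[OF has_integral_combine[OF \<open>a \<le> x\<close> _ J1
          has_integral_combine[OF \<open>x \<le> x'\<close> \<open>x' \<le> b\<close> J2 J3]]])
      (use \<open>x \<le> x'\<close> \<open>x' \<le> b\<close> in \<open>simp_all add: ends F_def x'_def m_def field_simps\<close>)
qed

lemma peano_kernel_square_has_integral:
  assumes x: "x \<in> {a..(a + b) / 2}"
  defines "u \<equiv> x - a" and "v \<equiv> (a + b) / 2 - x"
  shows "((\<lambda>t. (peano_kernel a b x t)\<^sup>2) has_integral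
      u^5 / 10 + v^5 / 10 + (u\<^sup>2 - v\<^sup>2) * v^3 / 3 + (u\<^sup>2 - v\<^sup>2)\<^sup>2 * v / 2) {a..b}"
proof -
  define m where "m = (a + b) / 2"
  define x' where "x' = a + b - x"
  define C where "C = u\<^sup>2 - v\<^sup>2"
  define G where "G k C t = ((t - k)^5 / 5 + 2 * C * (t - k)^3 / 3 + C\<^sup>2 * (t - k)) / 4" for k C t :: real
  have "a \<le> x" "x \<le> x'" "x' \<le> b" using x by (auto simp: x'_def)
  note pieces = peano_kernel_pieces[OF x, folded x'_def]
  have "((\<lambda>t. (peano_kernel a b x t)\<^sup>2) has_integral G a 0 x - G a 0 a) {a..x}"
    unfolding G_def
    by (rule has_integral_eq[OF _ has_integral_square_shifted_quadratic[OF \<open>a \<le> x\<close>, of a 0]])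
      (simp add: pieces)
  moreover have "((\<lambda>t. (peano_kernel a b x t)\<^sup>2) has_integral G m C x' - G m C x) {x..x'}"
    unfolding G_def
    by (rule has_integral_eq[OF _ has_integral_square_shifted_quadratic[OF \<open>x \<le> x'\<close>, of m C]])
      (simp add: pieces C_def u_def v_def m_def add_diff_eq)
  moreover have "((\<lambda>t. (peano_kernel a b x t)\<^sup>2) has_integral G b 0 b - G b 0 x') {x'..b}"
    unfolding G_def
    by (rule has_integral_eq[OF _ has_integral_square_shifted_quadratic[OF \<open>x' \<le> b\<close>, of b 0]])
      (simp add: pieces)
  ultimately have combined: "((\<lambda>t. (peano_kernel a b x t)\<^sup>2) has_integral
      (G a 0 x - G a 0 a) + ((G m C x' - G m C x) + (G b 0 b - G b 0 x'))) {a..b}"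
    using \<open>x \<le> x'\<close> \<open>x' \<le> b\<close>
    by (intro has_integral_combine[OF \<open>a \<le> x\<close> _ _ has_integral_combine[OF \<open>x \<le> x'\<close> \<open>x' \<le> b\<close>]]) auto
  have shifts: "x' - m = v" "x - m = - v" "x' - b = - u" "x - a = u"
    by (simp_all add: x'_def m_def u_def v_def field_simps)
  have "G a 0 x - G a 0 a = u^5 / 20" "G b 0 b - G b 0 x' = u^5 / 20"
    "G m C x' - G m C x = v^5 / 10 + C * v^3 / 3 + C\<^sup>2 * v / 2"
    unfolding G_def shifts by (simp_all add: power_minus_odd field_simps)
  with combined show ?thesis
    by (simp add: C_def add.assoc)
qed

lemma peano_kernel_moment_le:
  fixes u v :: real
  assumes "u \<ge> 0" "v \<ge> 0"
  shows "10 * (u^5 / 10 + v^5 / 10 + (u\<^sup>2 - v\<^sup>2) * v^3 / 3 + (u\<^sup>2 - v\<^sup>2)\<^sup>2 * v / 2)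
    \<le> (2 * (u + v))^3 * ((2 * (u + v))\<^sup>2 / 48 + ((u - v) / 2)\<^sup>2)"
proof -
  have "(2 * (u + v))^3 * ((2 * (u + v))\<^sup>2 / 48 + ((u - v) / 2)\<^sup>2)
      - 10 * (u^5 / 10 + v^5 / 10 + (u\<^sup>2 - v\<^sup>2) * v^3 / 3 + (u\<^sup>2 - v\<^sup>2)\<^sup>2 * v / 2)
    = (16 * u * v^4 + 28 * u\<^sup>2 * v^3 + 8 * u^3 * v\<^sup>2 + u^4 * v + 5 * u^5) / 3"
    by (simp add: field_simps eval_nat_numeral)
  moreover have "0 \<le> (16 * u * v^4 + 28 * u\<^sup>2 * v^3 + 8 * u^3 * v\<^sup>2 + u^4 * v + 5 * u^5) / 3"
    using assms by simp
  ultimately show ?thesis by linarith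
qed

lemma pi_squared_le_10: "pi\<^sup>2 \<le> 10"
proof -
  have "pi\<^sup>2 \<le> (316 / 100)\<^sup>2"
    using pi_approx(2) pi_gt_zero by (intro power_mono) auto
  then show ?thesis by (simp add: power2_eq_square)
qed

lemma sqrt_integral_peano_kernel_square_le:
  assumes "a < b" and x: "x \<in> {a..(a + b) / 2}"
  shows "sqrt (integral {a..b} (\<lambda>t. (peano_kernel a b x t)\<^sup>2))
    \<le> (b - a) * (sqrt (b - a) / pi * sqrt ((b - a)\<^sup>2 / 48 + (x - (3 * a + b) / 4)\<^sup>2))"
proof -
  define u where "u = x - a"
  define v where "v = (a + b) / 2 - x"
  define I where "I = integral {a..b} (\<lambda>t. (peano_kernel a b x t)\<^sup>2)"
  define Q where "Q = (b - a)\<^sup>2 / 48 + (x - (3 * a + b) / 4)\<^sup>2"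
  have kernel: "((\<lambda>t. (peano_kernel a b x t)\<^sup>2) has_integral I) {a..b}"
    using peano_kernel_square_has_integral[OF x] unfolding I_def by blast
  have scale: "b - a = 2 * (u + v)" "x - (3 * a + b) / 4 = (u - v) / 2"
    by (simp_all add: u_def v_def field_simps)
  have I_eq: "I = u^5 / 10 + v^5 / 10 + (u\<^sup>2 - v\<^sup>2) * v^3 / 3 + (u\<^sup>2 - v\<^sup>2)\<^sup>2 * v / 2"
    using integral_unique[OF peano_kernel_square_has_integral[OF x]] by (simp add: I_def u_def v_def)
  have "10 * I \<le> (b - a)^3 * Q"
    unfolding I_eq Q_def scale by (intro peano_kernel_moment_le) (use x in \<open>simp_all add: u_def v_def\<close>)
  moreover have "pi\<^sup>2 * I \<le> 10 * I"
    using pi_squared_le_10 has_integral_nonneg[OF kernel] by (intro mult_right_mono) auto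
  ultimately have "sqrt (pi\<^sup>2 * I) \<le> sqrt ((b - a)^3 * Q)"
    by (intro real_sqrt_le_mono) linarith
  then have "pi * sqrt I \<le> (b - a) * sqrt (b - a) * sqrt Q"
    using \<open>a < b\<close> by (simp add: real_sqrt_mult power3_eq_cube)
  then show ?thesis
    using pi_gt_zero by (simp add: I_def Q_def field_simps)
qed

theorem theorem2p2:
  fixes f f' f'' :: "real \<Rightarrow> real" and a b :: real
  assumes "a < b"
    and "continuous_on {a..b} f"
    and "\<And>t. t \<in> {a<..<b} \<Longrightarrow> (f has_real_derivative f' t) (at t)"
    and "\<And>t. t \<in> {a<..<b} \<Longrightarrow> (f' has_real_derivative f'' t) (at t)"
    and "continuous_on {a<..<b} f''"
    and "f'' \<in> borel_measurable (lebesgue_on {a..b})"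
    and "(\<lambda>t. (f'' t)\<^sup>2) integrable_on {a..b}"
  shows "\<forall>x \<in> {a..(a+b)/2}.
    \<bar>(f x + f (a + b - x)) / 2 - (1 / (b - a)) * integral {a..b} f\<bar>
      \<le> sqrt (b - a) / pi * sqrt ((b - a)\<^sup>2 / 48 + (x - (3*a + b)/4)\<^sup>2) * L2norm f'' a b"
proof
  fix x assume x: "x \<in> {a..(a+b)/2}"
  let ?K = "peano_kernel a b x"
  have identity: "((\<lambda>t. ?K t * f'' t) has_integral
      integral {a..b} f - (b - a) / 2 * (f x + f (a + b - x))) {a..b}"
    by (rule peano_kernel_has_integral[OF assms(1) x assms(2-4,7)])
  let ?R = "(f x + f (a + b - x)) / 2 - (1 / (b - a)) * integral {a..b} f"
  have "integral {a..b} (\<lambda>t. ?K t * f'' t) = - ((b - a) * ?R)"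
    unfolding integral_unique[OF identity] using assms(1) by (simp add: field_simps)
  then have "(b - a) * \<bar>?R\<bar> = \<bar>integral {a..b} (\<lambda>t. ?K t * f'' t)\<bar>"
    using assms(1) by (simp add: abs_mult)
  also have "\<dots> \<le> sqrt (integral {a..b} (\<lambda>t. (?K t)\<^sup>2)) * L2norm f'' a b"
    unfolding L2norm_def using peano_kernel_square_has_integral[OF x] assms(7)
    by (intro abs_integral_mult_le_sqrt has_integral_integrable[OF identity])
      (auto intro: integrable_integral)
  also have "\<dots> \<le> (b - a) * (sqrt (b - a) / pi * sqrt ((b - a)\<^sup>2 / 48 + (x - (3*a + b)/4)\<^sup>2))
      * L2norm f'' a b"
    by (intro mult_right_mono sqrt_integral_peano_kernel_square_le[OF assms(1) x])
      (simp add: L2norm_def integral_nonneg[OF assms(7)])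
  finally have "(b - a) * \<bar>?R\<bar>
      \<le> (b - a) * (sqrt (b - a) / pi * sqrt ((b - a)\<^sup>2 / 48 + (x - (3*a + b)/4)\<^sup>2) * L2norm f'' a b)"
    by (simp only: mult.assoc)
  then show "\<bar>?R\<bar> \<le> sqrt (b - a) / pi * sqrt ((b - a)\<^sup>2 / 48 + (x - (3*a + b)/4)\<^sup>2) * L2norm f'' a b"
    by (rule mult_left_le_imp_le) (use assms(1) in simp)
qed

end
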